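(* Let $n_1<n_2$ be positive integers with $\gcd(n_1,n_2)=1$, and let $N=2(n_1+n_2)$. Then $C(n_1,n_2,n_1+n_2)$ is a circle of $n_1+n_2$ tetrahedra boundaries. Explicitly, for each $a\in\mathbb{Z}/N$ the edge (tritone) $\{a,a+n_1+n_2\}$ lies in exactly four 2-simplices, which are contained in exactly the two tetrahedron boundaries on the vertex sets $\{a,a+n_1,a+n_1+n_2,a+2n_1+n_2\}$ and $\{a,a+n_2,a+n_1+n_2,a+n_1+2n_2\}$; these two tetrahedron boundaries intersect exactly in that edge, every 2-simplex lies in exactly one such tetrahedron boundary, and these tetrahedron boundaries are linked cyclically, each sharing opposite edges with its two neighbours.
   Context: For positive integers $n_1\le n_2\le n_3$ with $N=n_1+n_2+n_3$, $C(n_1,n_2,n_3)$ denotes the abstract simplicial complex whose vertex set is $\mathbb{Z}/N$, whose 2-simplices are all sets of the form $\{k,k+n_1,k+n_1+n_2\}$ or $\{k,k-n_1,k-n_1-n_2\}$ for $k\in\mathbb{Z}/N$, and whose 1-simplices are all sets $\{k,k+n_i\}$ with $k\in\mathbb{Z}/N$, $i\in\{1,2,3\}$. A tetrahedron boundary is the simplicial complex of all nonempty subsets of size at most 3 of a 4-element set. A circle of $m\ge 3$ tetrahedra boundaries is a simplicial complex that is a union of $m$ tetrahedron boundaries $T_0,\dots,T_{m-1}$ (indices mod $m$) such that $T_i\cap T_{i+1}$ is a single edge (with its vertices), the two edges $T_i\cap T_{i-1}$ and $T_i\cap T_{i+1}$ are opposite (disjoint) edges of $T_i$, and non-consecutive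 $T_i,T_j$ are disjoint. *)

theory Defs
  imports Main
begin

text \<open>Vertices of Z/N are represented by the integers 0..N-1, arithmetic taken mod N.
  A simplicial complex is represented by its set of (nonempty) faces.\<close>

definition cplx :: "nat \<Rightarrow> nat \<Rightarrow> nat \<Rightarrow> int set set" where
  "cplx n1 n2 n3 = (let N = int (n1 + n2 + n3) in
      {{k} | k. 0 \<le> k \<and> k < N}
    \<union> {{k, (k + int n) mod N} | k n. 0 \<le> k \<and> k < N \<and> n \<in> {n1, n2, n3}}
    \<union> {{k, (k + int n1) mod N, (k + int n1 + int n2) mod N} | k. 0 \<le> k \<and> k < N}
    \<union> {{k, (k - int n1) mod N, (k - int n1 - int n2) mod N} | k. 0 \<le> k \<and> k < N})"

definition tetra_faces :: "'a set \<Rightarrow> 'a set set" where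
  "tetra_faces V = {s. s \<subseteq> V \<and> s \<noteq> {} \<and> card s \<le> 3}"

definition is_tetra_boundary :: "'a set set \<Rightarrow> bool" where
  "is_tetra_boundary K \<longleftrightarrow> (\<exists>V. finite V \<and> card V = 4 \<and> K = tetra_faces V)"

definition edge_faces :: "'a set \<Rightarrow> 'a set set" where
  "edge_faces e = {s. s \<subseteq> e \<and> s \<noteq> {}}"

definition circle_of_tetra_on :: "'a set set \<Rightarrow> nat \<Rightarrow> (nat \<Rightarrow> 'a set set) \<Rightarrow> bool" where
  "circle_of_tetra_on K m T \<longleftrightarrow>
     m \<ge> 3 \<and> K = (\<Union>i<m. T i) \<and> (\<forall>i<m. is_tetra_boundary (T i)) \<and>
     (\<exists>E :: nat \<Rightarrow> 'a set.
        (\<forall>i<m. finite (E i) \<and> card (E i) = 2 \<and> T i \<inter> T ((i + 1) mod m) = edge_faces (E i)) \<and>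
        (\<forall>i<m. E i \<inter> E ((i + m - 1) mod m) = {})) \<and>
     (\<forall>i<m. \<forall>j<m. i \<noteq> j \<and> j \<noteq> (i + 1) mod m \<and> i \<noteq> (j + 1) mod m \<longrightarrow> T i \<inter> T j = {})"

definition circle_of_tetra :: "'a set set \<Rightarrow> nat \<Rightarrow> bool" where
  "circle_of_tetra K m \<longleftrightarrow> (\<exists>T. circle_of_tetra_on K m T)"

end

theory Submission
  imports Defs
begin

text \<open>Write \<open>m = n1 + n2\<close>, so \<open>N = 2m\<close> and the tritones \<open>{x, x + m}\<close> are the fibres of
  reduction mod \<open>m\<close>. Every simplex of \<open>C(n1, n2, n1 + n2)\<close> lies in one of the 4-sets \<open>T b\<close>, the
  union of the tritones over the classes \<open>b\<close> and \<open>b + n1\<close> mod \<open>m\<close>, and conversely all faces of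
  each \<open>T b\<close> belong to the complex; so the complex is the union of \<open>m\<close> tetrahedron boundaries
  indexed by \<open>\<int>/m\<close>. Since \<open>n1 \<noteq> n2\<close>, the classes \<open>b, b + n1, b + 2n1\<close> are distinct, hence
  \<open>T b \<inter> T (b + n1)\<close> is the tritone over \<open>b + n1\<close>, \<open>T b\<close> and \<open>T c\<close> are disjoint unless
  \<open>c \<in> {b, b \<plusminus> n1}\<close>, and two distinct tetrahedra never share a triangle. As \<open>n1\<close> is a unit
  mod \<open>m\<close>, the sequence \<open>T 0, T n1, T 2n1, \<dots>\<close> runs through all tetrahedra in a cycle, each
  sharing with its neighbours the disjoint tritones over \<open>i n1\<close> and \<open>(i + 1) n1\<close>.\<close>

lemma tetra_faces_Int: "tetra_faces A \<inter> tetra_faces B = tetra_faces (A \<inter> B)"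
  by (auto simp: tetra_faces_def)

lemma tetra_faces_empty [simp]: "tetra_faces {} = {}"
  by (auto simp: tetra_faces_def)

lemma tetra_faces_card_2:
  assumes "finite e" "card e = 2"
  shows "tetra_faces e = edge_faces e"
proof -
  have "card s \<le> 3" if "s \<subseteq> e" for s
    using card_mono[OF assms(1) that] assms(2) by simp
  then show ?thesis unfolding tetra_faces_def edge_faces_def by blast
qed

lemma is_tetra_boundary_tetra_faces:
  "finite V \<Longrightarrow> card V = 4 \<Longrightarrow> is_tetra_boundary (tetra_faces V)"
  unfolding is_tetra_boundary_def by blast

lemma proper_subset_of_four_cases:
  assumes "s \<subseteq> {a, b, c, d}" "s \<noteq> {}" "s \<noteq> {a, b, c, d}"
    and "P {a}" "P {b}" "P {c}" "P {d}"
    and "P {a, b}" "P {a, c}" "P {a, d}" "P {b, c}" "P {b, d}" "P {c, d}"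
    and "P {a, b, c}" "P {a, b, d}" "P {a, c, d}" "P {b, c, d}"
  shows "P s"
proof -
  have s: "s = (if a \<in> s then {a} else {}) \<union> (if b \<in> s then {b} else {}) \<union>
      (if c \<in> s then {c} else {}) \<union> (if d \<in> s then {d} else {})"
    using assms(1) by auto
  show ?thesis
    apply (cases "a \<in> s"; cases "b \<in> s"; cases "c \<in> s"; cases "d \<in> s")
    using assms s by (simp_all add: insert_commute)
qed

locale tritone_circle =
  fixes n1 n2 :: nat
  assumes n1_pos: "0 < n1" and n1_less_n2: "n1 < n2" and gcd_n1_n2: "gcd n1 n2 = 1"
begin

definition m :: int where "m = int n1 + int n2"

definition period :: int where "period = 2 * m"

definition tritone :: "int \<Rightarrow> int set" where
  "tritone y = {x. 0 \<le> x \<and> x < period \<and> x mod m = y mod m}"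

definition tetra :: "int \<Rightarrow> int set" where
  "tetra b = tritone b \<union> tritone (b + int n1)"

lemma m_pos: "0 < m" and n1_less_m: "int n1 < m" and period_pos: "0 < period"
  using n1_pos n1_less_n2 by (auto simp: m_def period_def)

lemma mod_period_bounds: "0 \<le> x mod period" "x mod period < period"
  using period_pos by simp_all

lemma mod_period_mod_m [simp]: "x mod period mod m = x mod m"
  by (simp add: period_def mod_mod_cancel)

lemma not_m_dvd_2n1: "\<not> m dvd 2 * int n1"
proof
  assume "m dvd 2 * int n1"
  then obtain t where t: "2 * int n1 = m * t" by (auto simp: dvd_def)
  have "0 < m * t" using t n1_pos by simp
  then have "0 < t" using m_pos by (simp add: zero_less_mult_iff)
  moreover have "t < 2"
  proof (rule ccontr)
    assume "\<not> t < 2"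
    then have "m * 2 \<le> m * t" using m_pos by (intro mult_left_mono) auto
    then show False using t n1_less_m by linarith
  qed
  ultimately have "t = 1" by simp
  with t n1_less_n2 show False by (simp add: m_def)
qed

lemma add_n1_mod_m_neq: "(b + int n1) mod m \<noteq> b mod m"
  using n1_pos n1_less_m zdvd_imp_le by (fastforce simp: mod_eq_dvd_iff)

lemma add_2n1_mod_m_neq: "(b + int n1 + int n1) mod m \<noteq> b mod m"
  using not_m_dvd_2n1 by (simp add: mod_eq_dvd_iff add.assoc)

lemma coprime_m_n1: "coprime m (int n1)"
proof -
  have "gcd (int n1) m = gcd (int n1) (int n2)" by (simp add: m_def gcd_add2)
  also have "\<dots> = 1" using gcd_n1_n2 by (metis gcd_int_int_eq of_nat_1)
  finally show ?thesis by (simp add: coprime_iff_gcd_eq_1 gcd.commute)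
qed

lemma mem_tritone: "x \<in> tritone y \<longleftrightarrow> 0 \<le> x \<and> x < period \<and> x mod m = y mod m"
  by (simp add: tritone_def)

lemma tritone_eq: "tritone y = {y mod period, (y + m) mod period}"
proof (intro set_eqI iffI)
  fix x assume "x \<in> tritone y"
  then have x: "0 \<le> x" "x < period" "x mod m = y mod m" by (auto simp: mem_tritone)
  then obtain t where t: "x - y = m * t" using mod_eq_dvd_iff by (metis dvd_def)
  consider u where "t = 2 * u" | u where "t = 2 * u + 1" by (metis oddE evenE)
  then show "x \<in> {y mod period, (y + m) mod period}"
  proof cases
    case 1
    then have "period dvd x - y" using t by (simp add: period_def)
    then have "x mod period = y mod period" by (simp add: mod_eq_dvd_iff)
    then show ?thesis using x by simp
  next
    case 2
    then have "x - (y + m) = period * u" using t by (simp add: period_def algebra_simps)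
    then have "period dvd x - (y + m)" by simp
    then have "x mod period = (y + m) mod period" by (simp add: mod_eq_dvd_iff)
    then show ?thesis using x by simp
  qed
next
  fix x assume "x \<in> {y mod period, (y + m) mod period}"
  then show "x \<in> tritone y" using period_pos by (auto simp: mem_tritone)
qed

lemma finite_tritone [simp]: "finite (tritone y)"
  by (simp add: tritone_eq)

lemma card_tritone [simp]: "card (tritone y) = 2"
proof -
  have "(y + m) mod period \<noteq> y mod period"
  proof
    assume "(y + m) mod period = y mod period"
    then have "period dvd m" by (simp add: mod_eq_dvd_iff)
    then show False using m_pos zdvd_imp_le by (fastforce simp: period_def)
  qed
  then show ?thesis by (simp add: tritone_eq)
qed

lemma tritone_cong: "y mod m = z mod m \<Longrightarrow> tritone y = tritone z"
  by (simp add: tritone_def)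

lemma tritone_disjoint: "y mod m \<noteq> z mod m \<Longrightarrow> tritone y \<inter> tritone z = {}"
  by (auto simp: tritone_def)

lemma tetra_cong: "b mod m = c mod m \<Longrightarrow> tetra b = tetra c"
  unfolding tetra_def by (metis tritone_cong mod_add_cong)

lemma mem_tetra:
  "x \<in> tetra b \<longleftrightarrow> 0 \<le> x \<and> x < period \<and> (x mod m = b mod m \<or> x mod m = (b + int n1) mod m)"
  by (auto simp: tetra_def mem_tritone)

lemma tetra_eq:
  "tetra b = {b mod period, (b + int n1) mod period, (b + m) mod period, (b + m + int n1) mod period}"
proof -
  have "b + int n1 + m = b + m + int n1" by simp
  then show ?thesis unfolding tetra_def tritone_eq by (simp only: insert_commute) blast
qed

lemma finite_tetra [simp]: "finite (tetra b)"
  by (simp add: tetra_def)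

lemma card_tetra [simp]: "card (tetra b) = 4"
  using tritone_disjoint[OF add_n1_mod_m_neq[symmetric]]
  by (simp add: tetra_def card_Un_disjoint)

lemma tetra_Int_tetra_next: "tetra b \<inter> tetra (b + int n1) = tritone (b + int n1)"
  using add_n1_mod_m_neq[of b] add_n1_mod_m_neq[of "b + int n1"] add_2n1_mod_m_neq[of b]
  by (auto simp: tetra_def mem_tritone)

lemma tetra_Int_tetra_prev: "tetra a \<inter> tetra (a - int n1) = tritone a"
  using tetra_Int_tetra_next[of "a - int n1"] by (simp add: Int_commute)

lemma tetra_disjoint:
  assumes "\<not> m dvd b - c" "\<not> m dvd b - c + int n1" "\<not> m dvd b - c - int n1"
  shows "tetra b \<inter> tetra c = {}"
proof (rule ccontr)
  assume "tetra b \<inter> tetra c \<noteq> {}"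
  then have "b mod m = c mod m \<or> (b + int n1) mod m = c mod m \<or>
      b mod m = (c + int n1) mod m \<or> (b + int n1) mod m = (c + int n1) mod m"
    by (auto simp: mem_tetra)
  then show False
    using assms by (auto simp: mod_eq_dvd_iff algebra_simps)
qed

text \<open>Two different tetrahedra share at most a tritone, hence no triangle.\<close>

lemma tetra_Int_subset_tritone:
  assumes "b mod m \<noteq> c mod m"
  obtains r where "tetra b \<inter> tetra c \<subseteq> tritone r"
proof (cases "b mod m = (c + int n1) mod m")
  case True
  then have "(b + int n1) mod m = (c + int n1 + int n1) mod m" by (metis mod_add_cong)
  then have "tetra b \<inter> tetra c \<subseteq> tritone b"
    using assms True add_n1_mod_m_neq[of b] add_2n1_mod_m_neq[of c] by (auto simp: tetra_def mem_tritone)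
  then show ?thesis using that by blast
next
  case False
  then have "tetra b \<inter> tetra c \<subseteq> tritone (b + int n1)"
    using assms by (auto simp: tetra_def mem_tritone)
  then show ?thesis using that by blast
qed

abbreviation C :: "int set set" where
  "C \<equiv> cplx n1 n2 (n1 + n2)"

lemma mem_C:
  "\<sigma> \<in> C \<longleftrightarrow> (\<exists>k. 0 \<le> k \<and> k < period \<and>
     (\<sigma> = {k} \<or>
      (\<exists>n\<in>{n1, n2, n1 + n2}. \<sigma> = {k, (k + int n) mod period}) \<or>
      \<sigma> = {k, (k + int n1) mod period, (k + int n1 + int n2) mod period} \<or>
      \<sigma> = {k, (k - int n1) mod period, (k - int n1 - int n2) mod period}))"
proof -
  have period: "int (n1 + n2 + (n1 + n2)) = period" by (simp add: period_def m_def)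
  show ?thesis unfolding cplx_def Let_def period by blast
qed

lemma vertex_in_C: "{x mod period} \<in> C"
  using mod_period_bounds unfolding mem_C by blast

lemma edge_in_C:
  assumes "n \<in> {n1, n2, n1 + n2}"
  shows "{x mod period, (x + int n) mod period} \<in> C"
proof -
  have "\<exists>n'\<in>{n1, n2, n1 + n2}.
      {x mod period, (x + int n) mod period} = {x mod period, (x mod period + int n') mod period}"
    using assms by (auto intro!: bexI[of _ n] simp: mod_add_left_eq)
  then show ?thesis
    unfolding mem_C by (intro exI[of _ "x mod period"] conjI mod_period_bounds disjI2[OF disjI1])
qed

lemma up_triangle_in_C:
  "{x mod period, (x + int n1) mod period, (x + int n1 + int n2) mod period} \<in> C"
  using mod_period_bounds[of x] unfolding mem_C
  by (intro exI[of _ "x mod period"]) (simp add: mod_add_left_eq add.assoc)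

lemma down_triangle_in_C:
  "{x mod period, (x - int n1) mod period, (x - int n1 - int n2) mod period} \<in> C"
  using mod_period_bounds[of x] unfolding mem_C
  by (intro exI[of _ "x mod period"]) (simp add: mod_diff_left_eq diff_diff_eq)

lemma tetra_faces_subset_C: "tetra_faces (tetra b) \<subseteq> C"
proof
  define v where "v d = (b + d) mod period" for d
  have wrap: "v (m + int n1 + int n2) = v 0" "v (- int n2) = v (m + int n1)"
  proof -
    have "b + (m + int n1 + int n2) = b + 0 + period" "b + (m + int n1) = b + - int n2 + period"
      by (simp_all add: period_def m_def)
    then show "v (m + int n1 + int n2) = v 0" "v (- int n2) = v (m + int n1)"
      unfolding v_def by (metis mod_add_self2)+
  qed
  have vertex: "{v d} \<in> C" for d
    unfolding v_def by (rule vertex_in_C)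
  have edge: "{v d, v (d + int n)} \<in> C" if "n \<in> {n1, n2, n1 + n2}" for d n
    using edge_in_C[OF that, of "b + d"] by (simp add: v_def add.assoc)
  have up: "{v d, v (d + int n1), v (d + int n1 + int n2)} \<in> C" for d
    using up_triangle_in_C[of "b + d"] by (simp add: v_def add.assoc)
  have down: "{v d, v (d - int n1), v (d - int n1 - int n2)} \<in> C" for d
    using down_triangle_in_C[of "b + d"] by (simp add: v_def algebra_simps)
  have m: "m = int (n1 + n2)" by (simp add: m_def)
  have tetra: "tetra b = {v 0, v (int n1), v m, v (m + int n1)}"
    by (simp add: tetra_eq v_def add.assoc)
  have a1: "{v 0, v (int n1)} \<in> C" using edge[of n1 0] by simp
  have a2: "{v 0, v m} \<in> C" using edge[of "n1 + n2" 0] by (simp add: m)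
  have a3: "{v 0, v (m + int n1)} \<in> C"
    using edge[of n2 "m + int n1"] wrap by (simp add: add.assoc insert_commute)
  have a4: "{v (int n1), v m} \<in> C"
    using edge[of n2 "int n1"] by (simp add: m_def)
  have a5: "{v (int n1), v (m + int n1)} \<in> C"
    using edge[of "n1 + n2" "int n1"] by (simp add: m_def add.commute)
  have a6: "{v m, v (m + int n1)} \<in> C" using edge[of n1 m] by simp
  have t1: "{v 0, v (int n1), v m} \<in> C" using up[of 0] by (simp add: m_def)
  have t2: "{v 0, v m, v (m + int n1)} \<in> C"
    using up[of m] wrap by (simp add: insert_commute)
  have t3: "{v 0, v (int n1), v (m + int n1)} \<in> C"
    using down[of "int n1"] wrap by (simp add: insert_commute)
  have t4: "{v (int n1), v m, v (m + int n1)} \<in> C"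
    using down[of "m + int n1"] by (simp add: m_def insert_commute)
  fix s assume "s \<in> tetra_faces (tetra b)"
  then have s: "s \<subseteq> tetra b" "s \<noteq> {}" "card s \<le> 3" by (simp_all add: tetra_faces_def)
  then have "s \<noteq> tetra b" by auto
  with s(1,2) show "s \<in> C" unfolding tetra
    by (rule proper_subset_of_four_cases[where P = "\<lambda>s. s \<in> C"])
      (use vertex a1 a2 a3 a4 a5 a6 t1 t2 t3 t4 in blast)+
qed

lemma face_of_C_in_tetra:
  assumes "\<sigma> \<in> C"
  obtains b where "\<sigma> \<in> tetra_faces (tetra b)"
proof -
  obtain k where k: "0 \<le> k" "k < period" and faces: "\<sigma> = {k} \<or>
      (\<exists>n\<in>{n1, n2, n1 + n2}. \<sigma> = {k, (k + int n) mod period}) \<or>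
      \<sigma> = {k, (k + int n1) mod period, (k + int n1 + int n2) mod period} \<or>
      \<sigma> = {k, (k - int n1) mod period, (k - int n1 - int n2) mod period}"
    using assms unfolding mem_C by blast
  have "\<sigma> \<noteq> {}" "card \<sigma> \<le> 3" using faces by (auto simp: card_insert_if)
  have tetra_k: "tetra k = {k, (k + int n1) mod period, (k + m) mod period, (k + m + int n1) mod period}"
    using tetra_eq[of k] k by simp
  have tetra_k': "tetra (k - int n1) =
      {(k - int n1) mod period, k, (k + int n2) mod period, (k - int n1 - int n2) mod period}"
  proof -
    have "k - int n1 + int n1 = k" "k - int n1 + m = k + int n2"
      "k - int n1 + m + int n1 = k - int n1 - int n2 + period"
      by (simp_all add: m_def period_def)
    with k show ?thesis using tetra_eq[of "k - int n1"] by (simp only: mod_add_self2 mod_pos_pos_trivial)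
  qed
  have "\<sigma> \<subseteq> tetra k \<or> \<sigma> \<subseteq> tetra (k - int n1)"
  proof -
    have m: "int (n1 + n2) = m" "k + int n1 + int n2 = k + m" "k + (int n1 + int n2) = k + m"
      by (simp_all add: m_def)
    from faces show ?thesis by (elim disjE bexE) (auto simp: tetra_k tetra_k' m)
  qed
  with \<open>\<sigma> \<noteq> {}\<close> \<open>card \<sigma> \<le> 3\<close> show ?thesis
    using that by (auto simp: tetra_faces_def)
qed

lemma C_eq_Union_tetra_faces: "C = (\<Union>b. tetra_faces (tetra b))"
proof
  show "C \<subseteq> (\<Union>b. tetra_faces (tetra b))"
  proof
    fix \<sigma> assume "\<sigma> \<in> C"
    then obtain b where "\<sigma> \<in> tetra_faces (tetra b)" by (rule face_of_C_in_tetra)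
    then show "\<sigma> \<in> (\<Union>b. tetra_faces (tetra b))" by blast
  qed
  show "(\<Union>b. tetra_faces (tetra b)) \<subseteq> C" using tetra_faces_subset_C by blast
qed

lemma triangle_in_C_iff: "card \<sigma> = 3 \<Longrightarrow> \<sigma> \<in> C \<longleftrightarrow> (\<exists>c. \<sigma> \<subseteq> tetra c)"
  unfolding C_eq_Union_tetra_faces by (auto simp: tetra_faces_def)

lemma triangle_in_unique_tetra:
  assumes "\<sigma> \<in> C" "card \<sigma> = 3"
  shows "\<exists>!V. V \<in> range tetra \<and> \<sigma> \<subseteq> V"
proof -
  obtain b where b: "\<sigma> \<subseteq> tetra b" using assms triangle_in_C_iff by blast
  have "tetra c = tetra b" if c: "\<sigma> \<subseteq> tetra c" for c
  proof (rule ccontr)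
    assume "tetra c \<noteq> tetra b"
    then have "c mod m \<noteq> b mod m" using tetra_cong by blast
    then obtain r where "tetra c \<inter> tetra b \<subseteq> tritone r" by (rule tetra_Int_subset_tritone)
    then have "\<sigma> \<subseteq> tritone r" using b c by blast
    then have "card \<sigma> \<le> card (tritone r)" by (rule card_mono[OF finite_tritone])
    with assms show False by simp
  qed
  with b show ?thesis by blast
qed

definition tetra_chain :: "nat \<Rightarrow> int set" where
  "tetra_chain i = tetra (int i * int n1)"

lemma n1_generates_mod_m:
  obtains i where "i < n1 + n2" "b mod m = (int i * int n1) mod m"
proof -
  obtain u v where uv: "u * int n1 + v * m = 1"
    using bezout_int[of "int n1" m] coprime_m_n1 by (metis coprime_iff_gcd_eq_1 gcd.commute)
  define i where "i = nat ((b * u) mod m)"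
  have i: "int i = (b * u) mod m" unfolding i_def using m_pos by simp
  then have "int i < m" using m_pos by simp
  then have "i < n1 + n2" by (simp add: m_def)
  moreover have "(int i * int n1) mod m = b mod m"
  proof -
    have "(int i * int n1) mod m = (b * (u * int n1)) mod m"
      unfolding i by (simp add: mod_mult_left_eq mult.assoc)
    also have "b * (u * int n1) = b * (u * int n1 + v * m) + (- b * v) * m"
      by (simp add: algebra_simps)
    also have "\<dots> = b + (- b * v) * m" by (simp add: uv)
    also have "(b + (- b * v) * m) mod m = b mod m" by (rule mod_mult_self1)
    finally show ?thesis .
  qed
  ultimately show ?thesis using that by simp
qed

lemma index_mod_cong: "int (j mod (n1 + n2)) mod m = int j mod m"
  by (simp add: m_def zmod_int)

lemma range_tetra: "range tetra = tetra_chain ` {..<n1 + n2}"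
proof
  show "range tetra \<subseteq> tetra_chain ` {..<n1 + n2}"
  proof
    fix V assume "V \<in> range tetra"
    then obtain b where b: "V = tetra b" by blast
    obtain i where i: "i < n1 + n2" "b mod m = (int i * int n1) mod m" by (rule n1_generates_mod_m)
    then have "V = tetra_chain i" unfolding b tetra_chain_def by (metis tetra_cong)
    with i show "V \<in> tetra_chain ` {..<n1 + n2}" by blast
  qed
qed (auto simp: tetra_chain_def)

lemma tetra_chain_Int_next:
  "tetra_chain i \<inter> tetra_chain ((i + 1) mod (n1 + n2)) = tritone (int i * int n1 + int n1)"
proof -
  have "(int ((i + 1) mod (n1 + n2)) * int n1) mod m = (int (i + 1) * int n1) mod m"
    by (metis index_mod_cong mod_mult_left_eq)
  then have "tetra_chain ((i + 1) mod (n1 + n2)) = tetra (int i * int n1 + int n1)"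
    unfolding tetra_chain_def by (intro tetra_cong) (simp add: algebra_simps)
  then show ?thesis by (simp add: tetra_chain_def tetra_Int_tetra_next)
qed

lemma tritone_chain_disjoint_prev:
  assumes "i < n1 + n2"
  defines "j \<equiv> (i + (n1 + n2) - 1) mod (n1 + n2)"
  shows "tritone (int i * int n1 + int n1) \<inter> tritone (int j * int n1 + int n1) = {}"
proof (rule tritone_disjoint)
  have "int j mod m = int (i + (n1 + n2) - 1) mod m" unfolding j_def by (rule index_mod_cong)
  then have "((int j + 1) * int n1) mod m = ((int (i + (n1 + n2) - 1) + 1) * int n1) mod m"
    by (metis mod_add_cong mod_mult_cong)
  also have "(int (i + (n1 + n2) - 1) + 1) * int n1 = int i * int n1 + m * int n1"
    using assms by (simp add: m_def algebra_simps of_nat_diff)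
  finally have "(int j * int n1 + int n1) mod m = (int i * int n1) mod m"
    by (simp add: distrib_right)
  then show "(int i * int n1 + int n1) mod m \<noteq> (int j * int n1 + int n1) mod m"
    using add_n1_mod_m_neq[of "int i * int n1"] by simp
qed

lemma not_m_dvd_index_diff:
  assumes "i < n1 + n2" "j < n1 + n2" "i \<noteq> j"
    and "j \<noteq> (i + 1) mod (n1 + n2)" "i \<noteq> (j + 1) mod (n1 + n2)" "\<delta> \<in> {-1, 0, 1}"
  shows "\<not> m dvd int i - int j + \<delta>"
proof
  assume "m dvd int i - int j + \<delta>"
  then have "int i - int j + \<delta> = 0 \<or> \<bar>m\<bar> \<le> \<bar>int i - int j + \<delta>\<bar>"
    using dvd_imp_le_int by blast
  moreover have "j \<noteq> i + 1" "\<not> (i + 1 = n1 + n2 \<and> j = 0)"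
    "i \<noteq> j + 1" "\<not> (j + 1 = n1 + n2 \<and> i = 0)"
    using assms(1,2,4,5) by auto
  ultimately show False using assms(1,2,3,6) by (auto simp: m_def)
qed

lemma tetra_chain_disjoint:
  assumes "i < n1 + n2" "j < n1 + n2" "i \<noteq> j"
    and "j \<noteq> (i + 1) mod (n1 + n2)" "i \<noteq> (j + 1) mod (n1 + n2)"
  shows "tetra_chain i \<inter> tetra_chain j = {}"
proof -
  have "\<not> m dvd (int i - int j + \<delta>) * int n1" if "\<delta> \<in> {-1, 0, 1}" for \<delta>
    using not_m_dvd_index_diff[OF assms that] coprime_m_n1
    by (simp add: coprime_dvd_mult_left_iff)
  from this[of 0] this[of 1] this[of "-1"] show ?thesis
    unfolding tetra_chain_def by (intro tetra_disjoint) (simp_all add: algebra_simps)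
qed

lemma circle_of_tetra_on_C: "circle_of_tetra_on C (n1 + n2) (\<lambda>i. tetra_faces (tetra_chain i))"
  unfolding circle_of_tetra_on_def
proof (intro conjI allI impI)
  show "3 \<le> n1 + n2" using n1_pos n1_less_n2 by simp
  have "C = \<Union> (tetra_faces ` range tetra)"
    unfolding C_eq_Union_tetra_faces by (simp add: image_image)
  then show "C = (\<Union>i<n1 + n2. tetra_faces (tetra_chain i))"
    unfolding range_tetra by (simp add: image_image)
  show "is_tetra_boundary (tetra_faces (tetra_chain i))" for i
    by (simp add: tetra_chain_def is_tetra_boundary_tetra_faces)
  show "\<exists>E. (\<forall>i<n1 + n2. finite (E i) \<and> card (E i) = 2 \<and>
          tetra_faces (tetra_chain i) \<inter> tetra_faces (tetra_chain ((i + 1) mod (n1 + n2))) =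
          edge_faces (E i)) \<and>
        (\<forall>i<n1 + n2. E i \<inter> E ((i + (n1 + n2) - 1) mod (n1 + n2)) = {})"
  proof (intro exI[of _ "\<lambda>i. tritone (int i * int n1 + int n1)"] conjI allI impI)
    fix i assume "i < n1 + n2"
    then show "tritone (int i * int n1 + int n1) \<inter>
        tritone (int ((i + (n1 + n2) - 1) mod (n1 + n2)) * int n1 + int n1) = {}"
      by (rule tritone_chain_disjoint_prev)
  qed (simp_all only: tetra_faces_Int tetra_chain_Int_next finite_tritone card_tritone
      tetra_faces_card_2)
  show "tetra_faces (tetra_chain i) \<inter> tetra_faces (tetra_chain j) = {}"
    if "i < n1 + n2" "j < n1 + n2"
      "i \<noteq> j \<and> j \<noteq> (i + 1) mod (n1 + n2) \<and> i \<noteq> (j + 1) mod (n1 + n2)" for i j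
    using tetra_chain_disjoint that by (simp add: tetra_faces_Int)
qed

lemma tritone_subset_tetra_iff:
  "tritone a \<subseteq> tetra c \<longleftrightarrow> tetra c = tetra a \<or> tetra c = tetra (a - int n1)"
proof
  assume "tritone a \<subseteq> tetra c"
  then have "a mod period \<in> tetra c" by (auto simp: tritone_eq)
  then have "a mod m = c mod m \<or> a mod m = (c + int n1) mod m" by (auto simp: mem_tetra)
  then show "tetra c = tetra a \<or> tetra c = tetra (a - int n1)"
  proof
    assume "a mod m = (c + int n1) mod m"
    then have "(a - int n1) mod m = (c + int n1 - int n1) mod m" by (metis mod_diff_cong)
    then have "(a - int n1) mod m = c mod m" by simp
    then show ?thesis by (metis tetra_cong)
  qed (metis tetra_cong)
next
  assume "tetra c = tetra a \<or> tetra c = tetra (a - int n1)"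
  then show "tritone a \<subseteq> tetra c" using tetra_Int_tetra_prev by blast
qed

lemma triangles_through_tritone:
  "{\<sigma> \<in> C. card \<sigma> = 3 \<and> tritone a \<subseteq> \<sigma>} =
    {\<sigma>. card \<sigma> = 3 \<and> tritone a \<subseteq> \<sigma> \<and> (\<sigma> \<subseteq> tetra a \<or> \<sigma> \<subseteq> tetra (a - int n1))}"
proof -
  have "\<sigma> \<in> C \<longleftrightarrow> \<sigma> \<subseteq> tetra a \<or> \<sigma> \<subseteq> tetra (a - int n1)"
    if "card \<sigma> = 3" "tritone a \<subseteq> \<sigma>" for \<sigma>
  proof -
    from that(1) have "\<sigma> \<in> C \<longleftrightarrow> (\<exists>c. \<sigma> \<subseteq> tetra c)" by (rule triangle_in_C_iff)
    also have "\<dots> \<longleftrightarrow> \<sigma> \<subseteq> tetra a \<or> \<sigma> \<subseteq> tetra (a - int n1)"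
      using that(2) tritone_subset_tetra_iff by blast
    finally show ?thesis .
  qed
  then show ?thesis by auto
qed

lemma triangles_through_tritone_eq_image:
  "{\<sigma> \<in> C. card \<sigma> = 3 \<and> tritone a \<subseteq> \<sigma>} =
    (\<lambda>y. insert y (tritone a)) ` (tritone (a + int n1) \<union> tritone (a - int n1))"
  (is "?S = _ ` ?Y")
proof -
  have "tetra (a - int n1) = tritone (a - int n1) \<union> tritone a" by (simp add: tetra_def)
  then have tetras: "tetra a \<union> tetra (a - int n1) = tritone a \<union> ?Y" by (auto simp: tetra_def)
  have "(a - int n1) mod m \<noteq> a mod m" using add_n1_mod_m_neq[of "a - int n1"] by simp
  then have disj: "?Y \<inter> tritone a = {}"
    using tritone_disjoint add_n1_mod_m_neq by blast
  have "\<sigma> \<in> ?S \<longleftrightarrow> \<sigma> \<in> (\<lambda>y. insert y (tritone a)) ` ?Y" for \<sigma>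
  proof
    assume "\<sigma> \<in> ?S"
    then have \<sigma>: "card \<sigma> = 3" "tritone a \<subseteq> \<sigma>" "\<sigma> \<subseteq> tetra a \<or> \<sigma> \<subseteq> tetra (a - int n1)"
      unfolding triangles_through_tritone by auto
    then have "card (\<sigma> - tritone a) = 1" by (simp add: card_Diff_subset)
    then obtain y where y: "\<sigma> - tritone a = {y}" by (rule card_1_singletonE)
    then have "\<sigma> = insert y (tritone a)" using \<sigma>(2) by blast
    moreover have "y \<in> ?Y" using \<sigma>(3) y tetras by blast
    ultimately show "\<sigma> \<in> (\<lambda>y. insert y (tritone a)) ` ?Y" by blast
  next
    assume "\<sigma> \<in> (\<lambda>y. insert y (tritone a)) ` ?Y"
    then obtain y where y: "y \<in> ?Y" "\<sigma> = insert y (tritone a)" by blast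
    then have "y \<notin> tritone a" using disj by blast
    then have "card \<sigma> = 3" using y(2) by simp
    moreover have "\<sigma> \<subseteq> tetra a \<or> \<sigma> \<subseteq> tetra (a - int n1)" using y by (auto simp: tetra_def)
    ultimately show "\<sigma> \<in> ?S" unfolding triangles_through_tritone using y by blast
  qed
  then show ?thesis by (rule set_eqI)
qed

lemma card_triangles_through_tritone: "card {\<sigma> \<in> C. card \<sigma> = 3 \<and> tritone a \<subseteq> \<sigma>} = 4"
proof -
  let ?Y = "tritone (a + int n1) \<union> tritone (a - int n1)"
  have "(a + int n1) mod m \<noteq> (a - int n1) mod m"
    using add_2n1_mod_m_neq[of "a - int n1"] by (simp add: algebra_simps)
  then have "card ?Y = 4" using tritone_disjoint by (simp add: card_Un_disjoint)
  moreover have "(a - int n1) mod m \<noteq> a mod m" using add_n1_mod_m_neq[of "a - int n1"] by simp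
  then have "inj_on (\<lambda>y. insert y (tritone a)) ?Y"
    using tritone_disjoint add_n1_mod_m_neq by (intro inj_onI) blast
  ultimately show ?thesis unfolding triangles_through_tritone_eq_image by (simp add: card_image)
qed

lemma tetras_through_tritone:
  "{V \<in> range tetra. \<exists>\<sigma>. \<sigma> \<in> C \<and> card \<sigma> = 3 \<and> tritone a \<subseteq> \<sigma> \<and> \<sigma> \<subseteq> V} =
    {tetra a, tetra (a - int n1)}"
proof (intro set_eqI iffI)
  fix V assume "V \<in> {V \<in> range tetra. \<exists>\<sigma>. \<sigma> \<in> C \<and> card \<sigma> = 3 \<and> tritone a \<subseteq> \<sigma> \<and> \<sigma> \<subseteq> V}"
  then obtain c \<sigma> where "V = tetra c" "tritone a \<subseteq> \<sigma>" "\<sigma> \<subseteq> V" by blast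
  then show "V \<in> {tetra a, tetra (a - int n1)}" using tritone_subset_tetra_iff by blast
next
  fix V assume V: "V \<in> {tetra a, tetra (a - int n1)}"
  let ?tri = "\<lambda>y. insert y (tritone a)"
  have "(a + int n1) mod period \<in> tritone (a + int n1)"
    "(a - int n1) mod period \<in> tritone (a - int n1)" by (simp_all add: tritone_eq)
  then have "?tri ((a + int n1) mod period) \<in> {\<sigma> \<in> C. card \<sigma> = 3 \<and> tritone a \<subseteq> \<sigma>}"
    "?tri ((a - int n1) mod period) \<in> {\<sigma> \<in> C. card \<sigma> = 3 \<and> tritone a \<subseteq> \<sigma>}"
    unfolding triangles_through_tritone_eq_image by blast+
  moreover have "?tri ((a + int n1) mod period) \<subseteq> tetra a"
    "?tri ((a - int n1) mod period) \<subseteq> tetra (a - int n1)"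
    using tetra_Int_tetra_prev by (auto simp: tetra_eq)
  ultimately show "V \<in> {V \<in> range tetra. \<exists>\<sigma>. \<sigma> \<in> C \<and> card \<sigma> = 3 \<and> tritone a \<subseteq> \<sigma> \<and> \<sigma> \<subseteq> V}"
    using V by blast
qed

lemma tetra_faces_Int_tetra_faces_prev:
  "tetra_faces (tetra a) \<inter> tetra_faces (tetra (a - int n1)) = edge_faces (tritone a)"
  by (simp add: tetra_faces_Int tetra_Int_tetra_prev tetra_faces_card_2)

lemma period_eq: "period = int (2 * (n1 + n2))"
  by (simp add: period_def m_def)

lemma tritone_explicit: "0 \<le> a \<Longrightarrow> a < period \<Longrightarrow> tritone a = {a, (a + int n1 + int n2) mod period}"
  by (simp add: tritone_eq m_def add.assoc)

lemma tetra_explicit: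
  assumes "0 \<le> a" "a < period"
  shows "tetra a = {a, (a + int n1) mod period, (a + int n1 + int n2) mod period,
    (a + 2 * int n1 + int n2) mod period}"
proof -
  have "a + m = a + int n1 + int n2" "a + m + int n1 = a + 2 * int n1 + int n2"
    by (simp_all add: m_def)
  with assms show ?thesis using tetra_eq[of a] by (simp only: mod_pos_pos_trivial)
qed

lemma tetra_prev_explicit:
  assumes "0 \<le> a" "a < period"
  shows "tetra (a - int n1) = {a, (a + int n2) mod period, (a + int n1 + int n2) mod period,
    (a + int n1 + 2 * int n2) mod period}"
proof -
  have "a - int n1 + int n1 = a" "a - int n1 + m = a + int n2"
    "a - int n1 + m + int n1 = a + int n1 + int n2"
    by (simp_all add: m_def)
  moreover have "(a + int n1 + 2 * int n2) mod period = (a - int n1) mod period"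
  proof -
    have "a + int n1 + 2 * int n2 = a - int n1 + period" by (simp add: m_def period_def)
    then show ?thesis by (metis mod_add_self2)
  qed
  ultimately show ?thesis using assms tetra_eq[of "a - int n1"]
    by (simp only: mod_pos_pos_trivial) blast
qed

lemma range_tetra_explicit:
  "range tetra = {tetra a | a. 0 \<le> a \<and> a < period} \<union> {tetra (a - int n1) | a. 0 \<le> a \<and> a < period}"
proof -
  have "tetra b = tetra (b mod period)" for b by (rule tetra_cong) simp
  then have "range tetra \<subseteq> {tetra a | a. 0 \<le> a \<and> a < period}" using mod_period_bounds by blast
  then show ?thesis by blast
qed

end

theorem theorem6p13:
  fixes n1 n2 :: nat
  assumes "0 < n1" and "n1 < n2" and "gcd n1 n2 = 1"
  defines "N \<equiv> int (2 * (n1 + n2))"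
  defines "K \<equiv> cplx n1 n2 (n1 + n2)"
  defines "V1 \<equiv> (\<lambda>a::int. {a, (a + int n1) mod N, (a + int n1 + int n2) mod N,
                              (a + 2 * int n1 + int n2) mod N})"
  defines "V2 \<equiv> (\<lambda>a::int. {a, (a + int n2) mod N, (a + int n1 + int n2) mod N,
                              (a + int n1 + 2 * int n2) mod N})"
  defines "Tets \<equiv> {V1 a | a. 0 \<le> a \<and> a < N} \<union> {V2 a | a. 0 \<le> a \<and> a < N}"
  shows "circle_of_tetra K (n1 + n2)
    \<and> (\<exists>T. circle_of_tetra_on K (n1 + n2) T \<and> T ` {..<n1 + n2} = tetra_faces ` Tets)
    \<and> (\<forall>a. 0 \<le> a \<and> a < N \<longrightarrow>
         (let e = {a, (a + int n1 + int n2) mod N};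
              S = {\<sigma> \<in> K. card \<sigma> = 3 \<and> e \<subseteq> \<sigma>} in
            card S = 4
          \<and> S = {\<sigma>. card \<sigma> = 3 \<and> e \<subseteq> \<sigma> \<and> (\<sigma> \<subseteq> V1 a \<or> \<sigma> \<subseteq> V2 a)}
          \<and> is_tetra_boundary (tetra_faces (V1 a)) \<and> is_tetra_boundary (tetra_faces (V2 a))
          \<and> tetra_faces (V1 a) \<subseteq> K \<and> tetra_faces (V2 a) \<subseteq> K
          \<and> {V \<in> Tets. \<exists>\<sigma>\<in>S. \<sigma> \<subseteq> V} = {V1 a, V2 a}
          \<and> tetra_faces (V1 a) \<inter> tetra_faces (V2 a) = edge_faces e))
    \<and> (\<forall>\<sigma>\<in>K. card \<sigma> = 3 \<longrightarrow> (\<exists>!V. V \<in> Tets \<and> \<sigma> \<subseteq> V))"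
proof -
  interpret tritone_circle n1 n2 using assms(1-3) by unfold_locales
  have N: "N = period" by (simp add: N_def period_eq)
  have V1: "V1 a = tetra a" and V2: "V2 a = tetra (a - int n1)"
    and edge: "{a, (a + int n1 + int n2) mod N} = tritone a" if "0 \<le> a" "a < N" for a
    using that by (simp_all add: V1_def V2_def N tetra_explicit tetra_prev_explicit tritone_explicit)
  have Tets: "Tets = range tetra"
    unfolding Tets_def range_tetra_explicit N[symmetric] using V1 V2 by blast
  have "(\<lambda>i. tetra_faces (tetra_chain i)) ` {..<n1 + n2} = tetra_faces ` range tetra"
    by (simp add: range_tetra image_image)
  then have circle:
    "\<exists>T. circle_of_tetra_on C (n1 + n2) T \<and> T ` {..<n1 + n2} = tetra_faces ` range tetra"
    using circle_of_tetra_on_C by blast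
  then have "circle_of_tetra C (n1 + n2)" unfolding circle_of_tetra_def by blast
  then show ?thesis
    unfolding K_def Let_def Tets
    using circle triangle_in_unique_tetra
    by (simp add: V1 V2 edge card_triangles_through_tritone triangles_through_tritone[symmetric]
        is_tetra_boundary_tetra_faces tetra_faces_subset_C tetras_through_tritone
        tetra_faces_Int_tetra_faces_prev)
qed

end
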